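(* Let $\mathcal{T}$ be a finite tree, $w:V(\mathcal{T})\to\mathbb{R}_{\ge0}$, and let $C$ be a centroid tree of $(\mathcal{T},w)$. For every $\varepsilon>0$ there is a weight function $w':V(\mathcal{T})\to\mathbb{R}_{\ge0}$ with $\|w'-w\|_\infty<\varepsilon$ such that $C$ is the unique centroid tree of $(\mathcal{T},w')$.
   Context: For a subgraph $\mathcal{H}$, $w(\mathcal{H})=\sum_{x\in V(\mathcal{H})}w(x)$. A search tree on a tree $\mathcal{T}$ is a rooted tree $T$ with vertex set $V(\mathcal{T})$ defined recursively: its root is an arbitrary vertex $r$, and the children of $r$ are the roots of search trees built on the connected components of $\mathcal{T}-r$; a single-vertex tree has only itself as search tree. A vertex $v$ is a centroid of $(\mathcal{T},w)$ if each component $\mathcal{H}$ of $\mathcal{T}-v$ has $w(\mathcal{H})\le w(\mathcal{T})/2$. A search tree $T$ is a centroid tree if each vertex $x$ is a centroid of $(\mathcal{T}[V(T_x)],w)$, $T_x$ being the subtree of $T$ rooted at $x$. *)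

theory Defs
  imports Complex_Main "HOL-Library.FSet"
begin

definition edges_in :: "('a \<Rightarrow> 'a \<Rightarrow> bool) \<Rightarrow> 'a set \<Rightarrow> ('a \<times> 'a) set" where
  "edges_in E S = {(x, y). x \<in> S \<and> y \<in> S \<and> E x y}"

definition comps :: "('a \<Rightarrow> 'a \<Rightarrow> bool) \<Rightarrow> 'a set \<Rightarrow> 'a set set" where
  "comps E S = {{y \<in> S. (x, y) \<in> (edges_in E S)\<^sup>*} | x. x \<in> S}"

definition connected_on :: "('a \<Rightarrow> 'a \<Rightarrow> bool) \<Rightarrow> 'a set \<Rightarrow> bool" where
  "connected_on E S \<longleftrightarrow> (\<forall>x\<in>S. \<forall>y\<in>S. (x, y) \<in> (edges_in E S)\<^sup>*)"

text \<open>A finite tree: finite nonempty vertex set, simple undirected graph, connected,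
  and acyclic (every edge is a bridge: removing it disconnects its endpoints).\<close>
definition is_tree :: "'a set \<Rightarrow> ('a \<Rightarrow> 'a \<Rightarrow> bool) \<Rightarrow> bool" where
  "is_tree V E \<longleftrightarrow> finite V \<and> V \<noteq> {} \<and>
     (\<forall>x y. E x y \<longrightarrow> x \<in> V \<and> y \<in> V \<and> x \<noteq> y \<and> E y x) \<and>
     connected_on E V \<and>
     (\<forall>x y. E x y \<longrightarrow>
        (x, y) \<notin> (edges_in E V - {(x, y), (y, x)})\<^sup>*)"

datatype 'a rtree = Node 'a "'a rtree fset"

primrec verts :: "'a rtree \<Rightarrow> 'a set" where
  "verts (Node r ts) = insert r (\<Union> (fset (fimage verts ts)))"

primrec root :: "'a rtree \<Rightarrow> 'a" where
  "root (Node r ts) = r"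

inductive search_tree :: "('a \<Rightarrow> 'a \<Rightarrow> bool) \<Rightarrow> 'a set \<Rightarrow> 'a rtree \<Rightarrow> bool"
  for E where
  "\<lbrakk> r \<in> S;
     verts ` fset ts = comps E (S - {r});
     inj_on verts (fset ts);
     \<forall>t\<in>fset ts. search_tree E (verts t) t \<rbrakk>
   \<Longrightarrow> search_tree E S (Node r ts)"

definition is_centroid :: "('a \<Rightarrow> 'a \<Rightarrow> bool) \<Rightarrow> ('a \<Rightarrow> real) \<Rightarrow> 'a set \<Rightarrow> 'a \<Rightarrow> bool" where
  "is_centroid E w S v \<longleftrightarrow> v \<in> S \<and>
     (\<forall>H\<in>comps E (S - {v}). sum w H \<le> sum w S / 2)"

inductive all_centroids :: "('a \<Rightarrow> 'a \<Rightarrow> bool) \<Rightarrow> ('a \<Rightarrow> real) \<Rightarrow> 'a rtree \<Rightarrow> bool"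
  for E w where
  "\<lbrakk> is_centroid E w (verts (Node r ts)) r;
     \<forall>t\<in>fset ts. all_centroids E w t \<rbrakk>
   \<Longrightarrow> all_centroids E w (Node r ts)"

definition centroid_tree :: "'a set \<Rightarrow> ('a \<Rightarrow> 'a \<Rightarrow> bool) \<Rightarrow> ('a \<Rightarrow> real) \<Rightarrow> 'a rtree \<Rightarrow> bool" where
  "centroid_tree V E w C \<longleftrightarrow> search_tree E V C \<and> all_centroids E w C"

end

theory Submission
  imports Defs
begin

text \<open>Perturb w by adding \<open>\<delta> q\<^sup>d\<close> to every vertex of depth d in C, where
  \<open>q n < 1\<close> for n vertices. In the subtree rooted at x, the vertex x alone then
  carries more added weight than any component below x, so x becomes a strict
  centroid: every component of the subtree minus x weighs strictly less than half.
  A strict centroid is the only centroid, which forces every centroid tree of the new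
  weight to agree with C, root by root.\<close>

lemma edges_in_rtrancl_mono:
  "(x, y) \<in> (edges_in E A)\<^sup>* \<Longrightarrow> A \<subseteq> B \<Longrightarrow> (x, y) \<in> (edges_in E B)\<^sup>*"
  by (rule rtrancl_mono[THEN subsetD]) (auto simp: edges_in_def)

lemma edges_in_rtrancl_sym:
  assumes "symp E" and "(x, y) \<in> (edges_in E A)\<^sup>*"
  shows "(y, x) \<in> (edges_in E A)\<^sup>*"
proof -
  have "sym (edges_in E A)"
    using \<open>symp E\<close> by (auto simp: sym_def edges_in_def dest: sympD)
  then show ?thesis
    using assms(2) by (metis sym_rtrancl symD)
qed

lemma edges_in_rtrancl_closed: "(x, y) \<in> (edges_in E A)\<^sup>* \<Longrightarrow> x \<in> A \<Longrightarrow> y \<in> A"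
  by (induct rule: rtrancl_induct) (auto simp: edges_in_def)

definition comp_of :: "('a \<Rightarrow> 'a \<Rightarrow> bool) \<Rightarrow> 'a set \<Rightarrow> 'a \<Rightarrow> 'a set" where
  "comp_of E A x = {y \<in> A. (x, y) \<in> (edges_in E A)\<^sup>*}"

lemma comps_eq_image_comp_of: "comps E A = comp_of E A ` A"
  by (auto simp: comps_def comp_of_def)

lemma edges_in_rtrancl_restrict:
  assumes "(a, b) \<in> (edges_in E A)\<^sup>*" and "comp_of E A a \<subseteq> B"
  shows "(a, b) \<in> (edges_in E (A \<inter> B))\<^sup>*"
  using assms(1)
proof (induct rule: rtrancl_induct)
  case base
  then show ?case by simp
next
  case (step b c)
  then have "b \<in> comp_of E A a" "c \<in> comp_of E A a"
    by (auto simp: comp_of_def edges_in_def intro: rtrancl_into_rtrancl)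
  with step assms(2) have "(b, c) \<in> edges_in E (A \<inter> B)"
    by (auto simp: edges_in_def)
  with step.hyps(3) show ?case by simp
qed

lemma edges_in_rtrancl_first_hit:
  assumes "(a, b) \<in> (edges_in E S)\<^sup>*" and "a \<in> S - {r}"
  shows "(a, b) \<in> (edges_in E (S - {r}))\<^sup>* \<or>
    (\<exists>u. (a, u) \<in> (edges_in E (S - {r}))\<^sup>* \<and> (u, r) \<in> edges_in E S)"
  using assms(1)
proof (induct rule: rtrancl_induct)
  case base
  then show ?case by simp
next
  case (step b c)
  show ?case
  proof (cases "(a, b) \<in> (edges_in E (S - {r}))\<^sup>*")
    case True
    then have "b \<in> S - {r}"
      using edges_in_rtrancl_closed assms(2) by metis
    with True step.hyps(2) show ?thesis
      by (cases "c = r") (auto simp: edges_in_def intro: rtrancl_into_rtrancl)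
  next
    case False
    with step.hyps(3) show ?thesis by blast
  qed
qed

lemma comps_subset: "H \<in> comps E A \<Longrightarrow> H \<subseteq> A"
  by (auto simp: comps_def)

lemma Union_comps: "\<Union> (comps E A) = A"
  by (auto simp: comps_def)

lemma comps_disjoint:
  assumes "symp E" and "H1 \<in> comps E A" "H2 \<in> comps E A" and "z \<in> H1" "z \<in> H2"
  shows "H1 = H2"
proof -
  obtain a b where "H1 = comp_of E A a" "H2 = comp_of E A b"
    using assms(2,3) by (auto simp: comps_eq_image_comp_of)
  with assms(4,5) have "(a, z) \<in> (edges_in E A)\<^sup>*" "(b, z) \<in> (edges_in E A)\<^sup>*"
    by (auto simp: comp_of_def)
  then have "(a, b) \<in> (edges_in E A)\<^sup>*" "(b, a) \<in> (edges_in E A)\<^sup>*"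
    using edges_in_rtrancl_sym[OF \<open>symp E\<close>] by (meson rtrancl_trans)+
  then show ?thesis
    using \<open>H1 = _\<close> \<open>H2 = _\<close> by (auto simp: comp_of_def intro: rtrancl_trans)
qed

lemma connected_on_comps:
  assumes "symp E" and "H \<in> comps E A"
  shows "connected_on E H"
proof -
  obtain a where a: "a \<in> A" "H = comp_of E A a"
    using assms(2) by (auto simp: comps_eq_image_comp_of)
  then have "A \<inter> H = H"
    by (auto simp: comp_of_def)
  then have "(a, y) \<in> (edges_in E H)\<^sup>*" if "y \<in> H" for y
    using edges_in_rtrancl_restrict[of a y E A H] a that by (auto simp: comp_of_def)
  then show ?thesis
    unfolding connected_on_def using edges_in_rtrancl_sym[OF \<open>symp E\<close>] by (meson rtrancl_trans)
qed

lemma comp_of_cover: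
  assumes "symp E" and "connected_on E S" and "r \<in> S" "r' \<in> S" "r \<noteq> r'"
  shows "S - comp_of E (S - {r}) r' \<subseteq> comp_of E (S - {r'}) r"
proof
  fix y assume y: "y \<in> S - comp_of E (S - {r}) r'"
  have "r' \<in> comp_of E (S - {r}) r'"
    using assms(4,5) by (simp add: comp_of_def)
  with y have "y \<noteq> r'" by blast
  show "y \<in> comp_of E (S - {r'}) r"
  proof (cases "y = r")
    case True
    then show ?thesis using assms(3,5) by (simp add: comp_of_def)
  next
    case False
    then have yA: "y \<in> S - {r}" using y by simp
    have "(y, r) \<in> (edges_in E S)\<^sup>*"
      using assms(2,3) y unfolding connected_on_def by blast
    moreover have "(y, r) \<notin> (edges_in E (S - {r}))\<^sup>*"
      using edges_in_rtrancl_closed[of y r E "S - {r}"] yA by blast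
    ultimately obtain u where yu: "(y, u) \<in> (edges_in E (S - {r}))\<^sup>*"
      and ur: "(u, r) \<in> edges_in E S"
      using edges_in_rtrancl_first_hit[OF _ yA] by blast
    have "r' \<notin> comp_of E (S - {r}) y"
    proof
      assume "r' \<in> comp_of E (S - {r}) y"
      then have "(r', y) \<in> (edges_in E (S - {r}))\<^sup>*"
        using edges_in_rtrancl_sym[OF \<open>symp E\<close>] by (simp add: comp_of_def)
      with y yA show False by (simp add: comp_of_def)
    qed
    then have "comp_of E (S - {r}) y \<subseteq> S - {r'}"
      by (auto simp: comp_of_def)
    from edges_in_rtrancl_restrict[OF yu this]
    have yu': "(y, u) \<in> (edges_in E (S - {r'}))\<^sup>*"
      by (rule edges_in_rtrancl_mono) blast
    have "y \<in> S - {r'}" using y \<open>y \<noteq> r'\<close> by blast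
    with yu' have "u \<in> S - {r'}"
      by (rule edges_in_rtrancl_closed)
    with ur assms(5) have "(u, r) \<in> edges_in E (S - {r'})"
      by (simp add: edges_in_def)
    with yu' have "(y, r) \<in> (edges_in E (S - {r'}))\<^sup>*" by simp
    then have "(r, y) \<in> (edges_in E (S - {r'}))\<^sup>*"
      by (rule edges_in_rtrancl_sym[OF \<open>symp E\<close>])
    with \<open>y \<in> S - {r'}\<close> show ?thesis by (simp add: comp_of_def)
  qed
qed

definition is_strict_centroid :: "('a \<Rightarrow> 'a \<Rightarrow> bool) \<Rightarrow> ('a \<Rightarrow> real) \<Rightarrow> 'a set \<Rightarrow> 'a \<Rightarrow> bool" where
  "is_strict_centroid E w S v \<longleftrightarrow> v \<in> S \<and>
     (\<forall>H\<in>comps E (S - {v}). sum w H < sum w S / 2)"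

lemma strict_centroid_unique:
  assumes "symp E" and "finite S" and "connected_on E S" and "\<forall>v\<in>S. w v \<ge> 0"
    and strict: "is_strict_centroid E w S r" and cen: "is_centroid E w S r'"
  shows "r' = r"
proof (rule ccontr)
  assume "r' \<noteq> r"
  have "r \<in> S" "r' \<in> S"
    using strict cen unfolding is_strict_centroid_def is_centroid_def by blast+
  define H where "H = comp_of E (S - {r}) r'"
  define K where "K = comp_of E (S - {r'}) r"
  have "H \<in> comps E (S - {r})" "K \<in> comps E (S - {r'})"
    using \<open>r \<in> S\<close> \<open>r' \<in> S\<close> \<open>r' \<noteq> r\<close> by (auto simp: H_def K_def comps_eq_image_comp_of)
  then have "sum w H < sum w S / 2" "sum w K \<le> sum w S / 2"
    using strict cen unfolding is_strict_centroid_def is_centroid_def by blast+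
  moreover have "sum w (S - H) \<le> sum w K"
    using comp_of_cover[OF assms(1,3) \<open>r \<in> S\<close> \<open>r' \<in> S\<close>] \<open>r' \<noteq> r\<close> assms(2,4)
    by (intro sum_mono2) (auto simp: H_def K_def comp_of_def intro: finite_subset)
  moreover have "sum w S = sum w H + sum w (S - H)"
    using assms(2) sum.subset_diff[of H S w] by (auto simp: H_def comp_of_def)
  ultimately show False by linarith
qed

inductive strict_centroids :: "('a \<Rightarrow> 'a \<Rightarrow> bool) \<Rightarrow> ('a \<Rightarrow> real) \<Rightarrow> 'a rtree \<Rightarrow> bool"
  for E w where
  "\<lbrakk> is_strict_centroid E w (verts (Node r ts)) r;
     \<forall>t\<in>fset ts. strict_centroids E w t \<rbrakk>
   \<Longrightarrow> strict_centroids E w (Node r ts)"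

lemma strict_centroids_cong:
  "strict_centroids E w t \<Longrightarrow> \<forall>v\<in>verts t. w v = w' v \<Longrightarrow> strict_centroids E w' t"
proof (induct rule: strict_centroids.induct)
  case (1 r ts)
  define S where "S = verts (Node r ts)"
  have "sum w' H = sum w H" if "H \<in> comps E (S - {r})" for H
    using comps_subset[OF that] 1(3) by (intro sum.cong) (auto simp: S_def)
  moreover have "sum w' S = sum w S"
    using 1(3) by (intro sum.cong) (auto simp: S_def)
  ultimately have "is_strict_centroid E w' S r"
    using 1(1) unfolding is_strict_centroid_def S_def[symmetric] by simp
  moreover have "\<forall>t\<in>fset ts. strict_centroids E w' t"
    using 1(2,3) by simp
  ultimately show ?case
    unfolding S_def by (rule strict_centroids.intros)
qed

lemma strict_centroids_imp_all_centroids: "strict_centroids E w t \<Longrightarrow> all_centroids E w t"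
proof (induct rule: strict_centroids.induct)
  case (1 r ts)
  then have "is_centroid E w (verts (Node r ts)) r"
    unfolding is_strict_centroid_def is_centroid_def by (blast intro: less_imp_le)
  with 1(2) show ?case
    by (blast intro: all_centroids.intros)
qed

lemma search_tree_verts: "search_tree E S t \<Longrightarrow> verts t = S"
proof (induct rule: search_tree.induct)
  case (1 r S ts)
  have "verts (Node r ts) = insert r (\<Union> (comps E (S - {r})))"
    using 1(2) by simp
  also have "\<dots> = S"
    using Union_comps[of E "S - {r}"] 1(1) by auto
  finally show ?case .
qed

lemma strict_centroids_unique:
  assumes "symp E"
  shows "search_tree E S t \<Longrightarrow> finite S \<Longrightarrow> connected_on E S \<Longrightarrow> \<forall>v\<in>S. w v \<ge> 0
    \<Longrightarrow> strict_centroids E w t \<Longrightarrow> search_tree E S t' \<Longrightarrow> all_centroids E w t' \<Longrightarrow> t' = t"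
proof (induct arbitrary: t' rule: search_tree.induct)
  case (1 r S ts)
  have "search_tree E S (Node r ts)"
    by (rule search_tree.intros) (use 1(1-4) in auto)
  then have vS: "verts (Node r ts) = S"
    by (rule search_tree_verts)
  from 1(9) obtain r' ts' where t': "t' = Node r' ts'" "verts ` fset ts' = comps E (S - {r'})"
    "\<forall>u\<in>fset ts'. search_tree E (verts u) u"
    by (auto elim: search_tree.cases)
  have vS': "verts t' = S"
    using 1(9) by (rule search_tree_verts)
  from 1(10) have cen: "is_centroid E w S r'" and ch': "\<forall>u\<in>fset ts'. all_centroids E w u"
    using vS' t'(1) by (auto elim: all_centroids.cases)
  from 1(8) have strict: "is_strict_centroid E w S r" and ch: "\<forall>u\<in>fset ts. strict_centroids E w u"
    using vS by (auto elim: strict_centroids.cases)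
  have "r' = r"
    using strict_centroid_unique[OF assms 1(5-7) strict cen] .
  have match: "u' = u" if u: "u \<in> fset ts" and u': "u' \<in> fset ts'" "verts u' = verts u" for u u'
  proof -
    have "verts u \<in> comps E (S - {r})"
      using 1(2) u by blast
    then have "verts u \<subseteq> S" "connected_on E (verts u)"
      using comps_subset connected_on_comps[OF assms] by blast+
    then have "finite (verts u)" "\<forall>v\<in>verts u. w v \<ge> 0"
      using 1(5,7) finite_subset by blast+
    moreover have "search_tree E (verts u) u'" "all_centroids E w u'"
      using t'(3) ch' u' by auto
    ultimately show ?thesis
      using 1(4) u ch \<open>connected_on E (verts u)\<close> by blast
  qed
  have "fset ts' = fset ts"
  proof (intro equalityI subsetI)
    fix u' assume "u' \<in> fset ts'"
    then have "verts u' \<in> verts ` fset ts"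
      using t'(2) 1(2) \<open>r' = r\<close> by (metis imageI)
    with match \<open>u' \<in> fset ts'\<close> show "u' \<in> fset ts" by auto
  next
    fix u assume "u \<in> fset ts"
    then have "verts u \<in> verts ` fset ts'"
      using t'(2) 1(2) \<open>r' = r\<close> by (metis imageI)
    with match \<open>u \<in> fset ts\<close> show "u \<in> fset ts'" by force
  qed
  then show ?case
    using t'(1) \<open>r' = r\<close> by (simp add: fset_inject)
qed

text \<open>On a search tree, \<open>level_weight q t v = q ^ depth v\<close> for \<open>v \<in> verts t\<close>, and it
  vanishes off the tree; the Max picks the unique child subtree containing v.\<close>

primrec level_weight :: "real \<Rightarrow> 'a rtree \<Rightarrow> 'a \<Rightarrow> real" where
  "level_weight q (Node r ts) v =
     (if v = r then 1 else q * Max (insert 0 (fset ((\<lambda>t. level_weight q t v) |`| ts))))"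

lemma level_weight_nonneg: "0 \<le> q \<Longrightarrow> 0 \<le> level_weight q t v"
  by (induct t) auto

lemma level_weight_le_1: "0 \<le> q \<Longrightarrow> q \<le> 1 \<Longrightarrow> level_weight q t v \<le> 1"
proof (induct t)
  case (Node r ts)
  then have "Max (insert 0 ((\<lambda>t. level_weight q t v) ` fset ts)) \<le> 1"
    by auto
  then show ?case
    using Node.prems by (simp add: mult_le_one level_weight_nonneg)
qed

lemma level_weight_outside: "v \<notin> verts t \<Longrightarrow> level_weight q t v = 0"
proof (induct t)
  case (Node r ts)
  then have "(\<lambda>t. level_weight q t v) ` fset ts \<subseteq> {0}"
    by force
  then have "Max (insert 0 ((\<lambda>t. level_weight q t v) ` fset ts)) = 0"
    by (intro Max_eqI) auto
  then show ?case
    using Node.prems by simp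
qed

lemma level_weight_child:
  assumes "symp E" and st: "search_tree E S (Node r ts)" and "0 \<le> q"
    and t: "t \<in> fset ts" and v: "v \<in> verts t"
  shows "level_weight q (Node r ts) v = q * level_weight q t v"
proof -
  from st have cm: "verts ` fset ts = comps E (S - {r})" and inj: "inj_on verts (fset ts)"
    by (auto elim: search_tree.cases)
  have tc: "verts t \<in> comps E (S - {r})" using cm t by auto
  then have "v \<noteq> r" using comps_subset v by fastforce
  have "level_weight q u v = 0" if "u \<in> fset ts" "u \<noteq> t" for u
  proof (rule level_weight_outside, rule notI)
    assume "v \<in> verts u"
    with comps_disjoint[OF \<open>symp E\<close> _ tc] cm that(1) v have "verts u = verts t" by blast
    with inj that t show False by (auto dest: inj_onD)
  qed
  then have "insert 0 ((\<lambda>u. level_weight q u v) ` fset ts) = {0, level_weight q t v}"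
    using t by auto
  then show ?thesis
    using \<open>v \<noteq> r\<close> level_weight_nonneg[OF \<open>0 \<le> q\<close>, of t v] by simp
qed

text \<open>The root gains \<open>\<delta>\<close>, while a component H below it gains at
  most \<open>\<delta> q |H| < \<delta>\<close>; since \<open>w(H) \<le> w(S - H)\<close> already, the inequality becomes strict.
  The children are handled by induction with \<open>\<delta> q\<close> in place of \<open>\<delta>\<close>.\<close>

lemma level_weight_perturbation_strict:
  fixes q :: real
  assumes "symp E" and "0 < q"
  shows "search_tree E S t \<Longrightarrow> all_centroids E w t \<Longrightarrow> finite S \<Longrightarrow> q * card S < 1 \<Longrightarrow> 0 < \<delta>
    \<Longrightarrow> strict_centroids E (\<lambda>v. w v + \<delta> * level_weight q t v) t"
proof (induct arbitrary: \<delta> rule: search_tree.induct)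
  case (1 r S ts)
  have st: "search_tree E S (Node r ts)"
    using search_tree.intros[OF 1(1-3)] 1(4) by blast
  have vS: "verts (Node r ts) = S" using search_tree_verts[OF st] .
  define G where "G = level_weight q (Node r ts)"
  define w' where "w' = (\<lambda>v. w v + \<delta> * G v)"
  have cen: "is_centroid E w S r" and ch: "\<forall>t\<in>fset ts. all_centroids E w t"
    using 1(5) vS by (auto elim: all_centroids.cases)
  have "1 \<le> real (card S)"
    using 1(1,6) card_gt_0_iff[of S] by (auto simp: Suc_le_eq)
  then have "q \<le> 1"
    using mult_left_mono[of 1 "card S" q] \<open>0 < q\<close> 1(7) by linarith
  have G_child: "G v = q * level_weight q t v" if "t \<in> fset ts" "v \<in> verts t" for t v
    unfolding G_def using level_weight_child[OF \<open>symp E\<close> st _ that] \<open>0 < q\<close> by simp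
  have "sum w' H < sum w' S / 2" if H: "H \<in> comps E (S - {r})" for H
  proof -
    obtain t where t: "t \<in> fset ts" "H = verts t" using H 1(2) by auto
    have HS: "H \<subseteq> S - {r}" using comps_subset[OF H] .
    have "sum G H = q * sum (level_weight q t) H"
      using G_child t by (simp add: sum_distrib_left)
    also have "\<dots> \<le> q * card H"
      using sum_mono[of H "level_weight q t" "\<lambda>_. 1"] level_weight_le_1[of q t] \<open>0 < q\<close> \<open>q \<le> 1\<close>
      by (intro mult_left_mono) auto
    also have "\<dots> \<le> q * card S"
      using card_mono[OF 1(6)] HS \<open>0 < q\<close> by (intro mult_left_mono) auto
    also have "\<dots> < G r" using 1(7) by (simp add: G_def)
    also have "\<dots> \<le> sum G (S - H)"
      using 1(1,6) HS level_weight_nonneg \<open>0 < q\<close> by (intro member_le_sum) (auto simp: G_def)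
    finally have "sum G H < sum G (S - H)" .
    have split: "sum f S = sum f H + sum f (S - H)" for f :: "'a \<Rightarrow> real"
      using HS 1(6) sum.subset_diff[of H S f] by (auto simp: add.commute)
    have "sum w H \<le> sum w S / 2"
      using cen H unfolding is_centroid_def by blast
    with split[of w] have "sum w H \<le> sum w (S - H)"
      by linarith
    with \<open>sum G H < sum G (S - H)\<close> have "sum w' H < sum w' (S - H)"
      using 1(8) by (simp add: w'_def sum.distrib sum_distrib_left[symmetric] add_le_less_mono)
    with split[of w'] show ?thesis
      by linarith
  qed
  then have root: "is_strict_centroid E w' S r"
    using 1(1) by (simp add: is_strict_centroid_def)
  have "strict_centroids E w' t" if t: "t \<in> fset ts" for t
  proof -
    have "verts t \<subseteq> S" using comps_subset 1(2) t by blast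
    then have "finite (verts t)" "card (verts t) \<le> card S"
      using 1(6) finite_subset card_mono by blast+
    moreover have "q * card (verts t) \<le> q * card S"
      using \<open>card (verts t) \<le> card S\<close> \<open>0 < q\<close> by (intro mult_left_mono) auto
    then have "q * card (verts t) < 1"
      using 1(7) by linarith
    moreover have "all_centroids E w t" "0 < \<delta> * q"
      using ch t 1(8) \<open>0 < q\<close> by auto
    moreover from 1(4) t have "all_centroids E w t \<Longrightarrow> finite (verts t) \<Longrightarrow>
      q * card (verts t) < 1 \<Longrightarrow> 0 < \<delta>' \<Longrightarrow>
      strict_centroids E (\<lambda>v. w v + \<delta>' * level_weight q t v) t" for \<delta>'
      by blast
    ultimately have "strict_centroids E (\<lambda>v. w v + (\<delta> * q) * level_weight q t v) t"
      by blast
    then show ?thesis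
      by (rule strict_centroids_cong) (simp add: w'_def G_child[OF t])
  qed
  with root vS show ?case
    unfolding w'_def G_def by (intro strict_centroids.intros) auto
qed

theorem mainTheorem18:
  fixes V :: "'a set" and E :: "'a \<Rightarrow> 'a \<Rightarrow> bool" and w :: "'a \<Rightarrow> real"
    and C :: "'a rtree" and \<epsilon> :: real
  assumes "is_tree V E"
    and "\<forall>x\<in>V. w x \<ge> 0"
    and "centroid_tree V E w C"
    and "\<epsilon> > 0"
  shows "\<exists>w' :: 'a \<Rightarrow> real. (\<forall>x\<in>V. w' x \<ge> 0) \<and> (\<forall>x\<in>V. \<bar>w' x - w x\<bar> < \<epsilon>) \<and>
           centroid_tree V E w' C \<and> (\<forall>C'. centroid_tree V E w' C' \<longrightarrow> C' = C)"
proof -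
  have fin: "finite V" and sym: "symp E" and conn: "connected_on E V"
    using assms(1) unfolding is_tree_def symp_def by blast+
  have st: "search_tree E V C" and ac: "all_centroids E w C"
    using assms(3) unfolding centroid_tree_def by auto
  define q where "q = 1 / (real (card V) + 1)"
  have "0 < q" "q \<le> 1" "q * card V < 1"
    by (auto simp: q_def field_simps)
  define w' where "w' = (\<lambda>v. w v + \<epsilon> / 2 * level_weight q C v)"
  have strict: "strict_centroids E w' C"
    unfolding w'_def
    by (rule level_weight_perturbation_strict[OF sym \<open>0 < q\<close> st ac fin \<open>q * card V < 1\<close>])
      (use assms(4) in simp)
  have bounds: "0 \<le> level_weight q C v" "level_weight q C v \<le> 1" for v
    using level_weight_nonneg[of q C v] level_weight_le_1[of q C v] \<open>0 < q\<close> \<open>q \<le> 1\<close>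
    by linarith+
  have nonneg: "\<forall>x\<in>V. w' x \<ge> 0"
    using assms(2,4) bounds by (simp add: w'_def)
  moreover have "\<forall>x\<in>V. \<bar>w' x - w x\<bar> < \<epsilon>"
  proof
    fix x
    have "\<bar>w' x - w x\<bar> \<le> \<epsilon> / 2"
      using assms(4) bounds[of x] by (simp add: w'_def mult_left_le)
    then show "\<bar>w' x - w x\<bar> < \<epsilon>"
      using assms(4) by linarith
  qed
  moreover have "centroid_tree V E w' C"
    using st strict_centroids_imp_all_centroids[OF strict] by (simp add: centroid_tree_def)
  moreover have "\<forall>C'. centroid_tree V E w' C' \<longrightarrow> C' = C"
    using strict_centroids_unique[OF sym st fin conn nonneg strict] by (auto simp: centroid_tree_def)
  ultimately show ?thesis by blast
qed

end
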